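(* Consider Plurality Voting (PV) used in every district. (Upper bounds.) For every district-based election with $m$ alternatives, $n$ voters and $k$ districts, every way of breaking ties (in the induced rankings, in the local plurality counts, and in the final weighted count), and every resulting election winner $a$, $$\frac{\max_j\mathrm{SW}(j\mid\mathbf v)}{\mathrm{SW}(a\mid\mathbf v)}\le \begin{cases} 1+\dfrac{3m^2k}{4} & \text{(symmetric)},\\[2mm] 1+\dfrac{m^2}{4}\left(\dfrac{3n+\max_d n_d}{\min_d n_d}-1\right) & \text{(unweighted)},\\[2mm] 1+m^2\left(\dfrac{n}{\min_d n_d}-\dfrac12\right) & \text{(unrestricted)}. \end{cases}$$ (Tightness.) (a) For all integers $m>k\ge2$ and district sizes $n_1,\dots,n_k$ (sum $n$) such that $n_1=\min_\ell n_\ell$ is divisible by $m$, $n_2=\max_\ell n_\ell$, and $n_\ell$ is even for $\ell\ge3$, there is an unweighted election with these district sizes and a tie resolution for which the ratio equals $1+\frac{m^2}{4}\left(\frac{3n+n_2}{n_1}-1\right)$; in particular, when $n_\ell=n/k$ for all $\ell$ with $n/k$ divisible by $m$ (and even if $k\ge3$), the symmetric bound $1+\frac{3m^2k}{4}$ is attained. (b) For all $m\ge2$, $k\ge2$ and district sizes whose minimum is divisible by $m$, there are positive weights, a valuation profile and a tie resolution for which the ratio equals $1+m^2\left(\frac{n}{\min_d n_d}-\frac12\right)$. Thus the distributed distortion of PV is exactly these three values.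
   Context: A district-based election consists of a set $\mathcal M$ of $m$ alternatives, a set $\mathcal N$ of $n$ voters, a partition $\mathcal D$ of $\mathcal N$ into $k$ nonempty districts (district $d$ has $n_d$ voters), positive weights $w_d$, and a valuation profile $\mathbf v$ with $v_{ij}\ge0$, $\sum_j v_{ij}=1$ for all $i$. Each voter's ranking is induced by her valuations ($j$ ranked above $j'$ only if $v_{ij}\ge v_{ij'}$), with ties among equal values broken arbitrarily. Plurality Voting elects, in a given set of voters, an alternative ranked first by the maximum number of voters (ties arbitrary). The local winner $j_d$ of district $d$ is the PV winner among voters of $d$; the election winner is any alternative in $\arg\max_j\sum_d w_d\mathbf 1[j=j_d]$. $\mathrm{SW}(j\mid\mathbf v)=\sum_i v_{ij}$. Symmetric: $n_d=n/k$, $w_d=1$; unweighted: $w_d=1$; unrestricted: arbitrary sizes and positive weights. Distributed distortion: supremum over elections of the class and all tie resolutions of $\max_j\mathrm{SW}(j\mid\mathbf v)/\mathrm{SW}(\text{winner}\mid\mathbf v)$. *)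

theory Defs
  imports Complex_Main
begin

text \<open>Alternatives are 0..<m, voters are 0..<n, districts are 0..<k.
  A district assignment dst maps each voter i<n to her district dst i < k.
  w d is the weight of district d, v i j the valuation of voter i for alternative j.\<close>

definition dsize :: "nat \<Rightarrow> (nat \<Rightarrow> nat) \<Rightarrow> nat \<Rightarrow> nat" where
  "dsize n dst d = card {i. i < n \<and> dst i = d}"

definition valid_election ::
  "nat \<Rightarrow> nat \<Rightarrow> nat \<Rightarrow> (nat \<Rightarrow> nat) \<Rightarrow> (nat \<Rightarrow> real) \<Rightarrow> (nat \<Rightarrow> nat \<Rightarrow> real) \<Rightarrow> bool" where
  "valid_election m n k dst w v \<longleftrightarrow>
     k \<ge> 1 \<and>
     (\<forall>i<n. dst i < k) \<and>
     (\<forall>d<k. \<exists>i<n. dst i = d) \<and>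
     (\<forall>d<k. w d > 0) \<and>
     (\<forall>i<n. \<forall>j<m. v i j \<ge> 0) \<and>
     (\<forall>i<n. (\<Sum>j<m. v i j) = 1)"

definition unweighted :: "nat \<Rightarrow> (nat \<Rightarrow> real) \<Rightarrow> bool" where
  "unweighted k w \<longleftrightarrow> (\<forall>d<k. w d = 1)"

definition symmetric :: "nat \<Rightarrow> nat \<Rightarrow> (nat \<Rightarrow> nat) \<Rightarrow> (nat \<Rightarrow> real) \<Rightarrow> bool" where
  "symmetric n k dst w \<longleftrightarrow> unweighted k w \<and> (\<forall>d<k. dsize n dst d * k = n)"

text \<open>Tie resolution in the induced rankings: tp i is a first-ranked alternative of voter i,
  i.e. any alternative of maximum value for i.\<close>
definition valid_top :: "nat \<Rightarrow> nat \<Rightarrow> (nat \<Rightarrow> nat \<Rightarrow> real) \<Rightarrow> (nat \<Rightarrow> nat) \<Rightarrow> bool" where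
  "valid_top m n v tp \<longleftrightarrow> (\<forall>i<n. tp i < m \<and> (\<forall>j<m. v i j \<le> v i (tp i)))"

definition pcount :: "nat \<Rightarrow> (nat \<Rightarrow> nat) \<Rightarrow> (nat \<Rightarrow> nat) \<Rightarrow> nat \<Rightarrow> nat \<Rightarrow> nat" where
  "pcount n dst tp d j = card {i. i < n \<and> dst i = d \<and> tp i = j}"

definition valid_local_winners ::
  "nat \<Rightarrow> nat \<Rightarrow> nat \<Rightarrow> (nat \<Rightarrow> nat) \<Rightarrow> (nat \<Rightarrow> nat) \<Rightarrow> (nat \<Rightarrow> nat) \<Rightarrow> bool" where
  "valid_local_winners m n k dst tp lw \<longleftrightarrow>
     (\<forall>d<k. lw d < m \<and> (\<forall>j<m. pcount n dst tp d j \<le> pcount n dst tp d (lw d)))"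

definition wscore :: "nat \<Rightarrow> (nat \<Rightarrow> real) \<Rightarrow> (nat \<Rightarrow> nat) \<Rightarrow> nat \<Rightarrow> real" where
  "wscore k w lw j = (\<Sum>d<k. if lw d = j then w d else 0)"

text \<open>A PV outcome: tie resolutions tp (rankings), lw (local counts), and election winner a
  (final weighted count).\<close>
definition pv_outcome ::
  "nat \<Rightarrow> nat \<Rightarrow> nat \<Rightarrow> (nat \<Rightarrow> nat) \<Rightarrow> (nat \<Rightarrow> real) \<Rightarrow> (nat \<Rightarrow> nat \<Rightarrow> real)
   \<Rightarrow> (nat \<Rightarrow> nat) \<Rightarrow> (nat \<Rightarrow> nat) \<Rightarrow> nat \<Rightarrow> bool" where
  "pv_outcome m n k dst w v tp lw a \<longleftrightarrow>
     valid_top m n v tp \<and> valid_local_winners m n k dst tp lw \<and>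
     a < m \<and> (\<forall>j<m. wscore k w lw j \<le> wscore k w lw a)"

definition SW :: "nat \<Rightarrow> (nat \<Rightarrow> nat \<Rightarrow> real) \<Rightarrow> nat \<Rightarrow> real" where
  "SW n v j = (\<Sum>i<n. v i j)"

definition ratio :: "nat \<Rightarrow> nat \<Rightarrow> (nat \<Rightarrow> nat \<Rightarrow> real) \<Rightarrow> nat \<Rightarrow> real" where
  "ratio m n v a = Max ((\<lambda>j. SW n v j) ` {..<m}) / SW n v a"

definition min_size :: "nat \<Rightarrow> nat \<Rightarrow> (nat \<Rightarrow> nat) \<Rightarrow> nat" where
  "min_size n k dst = Min ((\<lambda>d. dsize n dst d) ` {..<k})"

definition max_size :: "nat \<Rightarrow> nat \<Rightarrow> (nat \<Rightarrow> nat) \<Rightarrow> nat" where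
  "max_size n k dst = Max ((\<lambda>d. dsize n dst d) ` {..<k})"

end

theory Submission
  imports Defs
begin

(*
  A voter values her top alternative at least 1/m and every other alternative at
  most 1/2. If a wins districts of total size N_a, at least a 1/m fraction of their voters rank a
  first, so SW(a) >= N_a / m^2. An alternative j != a collects at most A_d + n_d/2 in a district
  won by a (A_d being the welfare of a from the voters ranking a first, part of SW(a)), at most
  n_d in a district won by j, and at most 3 n_d / 4 elsewhere, where at most half of the voters
  rank j first. Hence SW(j) <= SW(a) + (3n - N_a + N_j)/4, and the three bounds follow from
  N_a >= min_d n_d together with N_j <= n - N_a, respectively N_j <= t max_d n_d <= N_a max_d n_d
  / min_d n_d for the number t of districts won by a when all weights are equal.

  The extremal profiles mix indifferent voters, voters devoted to alternative 1 and
  voters split between 1 and one other alternative: ties let alternative 0, valued only by the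
  indifferent voters of one smallest district, win, while alternative 1 collects almost all welfare.
*)

section \<open>Upper bounds\<close>

definition district_voters :: "nat \<Rightarrow> (nat \<Rightarrow> nat) \<Rightarrow> nat \<Rightarrow> nat set" where
  "district_voters n dst d = {i. i < n \<and> dst i = d}"

lemma finite_district_voters [simp]: "finite (district_voters n dst d)"
  unfolding district_voters_def by simp

lemma card_district_voters: "card (district_voters n dst d) = dsize n dst d"
  unfolding district_voters_def dsize_def ..

lemma sum_over_districts:
  assumes "valid_election m n k dst w v"
  shows "(\<Sum>i<n. f i) = (\<Sum>d<k. \<Sum>i\<in>district_voters n dst d. f i)"
proof -
  have "(\<Sum>d<k. \<Sum>i\<in>{i \<in> {..<n}. dst i = d}. f i) = (\<Sum>i<n. f i)"
    by (rule sum.group) (use assms in \<open>auto simp: valid_election_def\<close>)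
  then show ?thesis
    by (simp add: district_voters_def)
qed

lemma sum_dsize:
  assumes "valid_election m n k dst w v"
  shows "(\<Sum>d<k. real (dsize n dst d)) = real n"
  using sum_over_districts[OF assms, of "\<lambda>_. 1::real"] by (simp add: card_district_voters)

lemma dsize_pos:
  assumes "valid_election m n k dst w v" "d < k"
  shows "0 < dsize n dst d"
proof -
  obtain i where "i \<in> district_voters n dst d"
    using assms unfolding valid_election_def district_voters_def by auto
  then have "district_voters n dst d \<noteq> {}"
    by blast
  then show ?thesis
    by (simp flip: card_district_voters add: card_gt_0_iff)
qed

lemma min_size_le_dsize: "d < k \<Longrightarrow> min_size n k dst \<le> dsize n dst d"
  unfolding min_size_def by simp

lemma dsize_le_max_size: "d < k \<Longrightarrow> dsize n dst d \<le> max_size n k dst"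
  unfolding max_size_def by simp

lemma min_size_pos:
  assumes "valid_election m n k dst w v"
  shows "0 < min_size n k dst"
proof -
  have "0 < k"
    using assms unfolding valid_election_def by auto
  then have "min_size n k dst \<in> (\<lambda>d. dsize n dst d) ` {..<k}"
    unfolding min_size_def by (intro Min_in) auto
  then show ?thesis
    using dsize_pos[OF assms] by auto
qed

lemma valuation_le_one:
  fixes u :: "nat \<Rightarrow> real"
  assumes "\<forall>j<m. 0 \<le> u j" "(\<Sum>j<m. u j) = 1" "j < m"
  shows "u j \<le> 1"
  using member_le_sum[of j "{..<m}" u] assms by simp

lemma valuation_le_half:
  fixes u :: "nat \<Rightarrow> real"
  assumes "\<forall>j<m. 0 \<le> u j" "(\<Sum>j<m. u j) = 1" "\<forall>j<m. u j \<le> u t" "t < m" "j < m" "j \<noteq> t"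
  shows "u j \<le> 1 / 2"
proof -
  have "u j + u t = (\<Sum>j'\<in>{j, t}. u j')"
    using assms(6) by simp
  also have "\<dots> \<le> (\<Sum>j'<m. u j')"
    by (rule sum_mono2) (use assms in auto)
  moreover have "u j \<le> u t"
    using assms by simp
  ultimately show ?thesis
    using assms(2) by linarith
qed

lemma top_valuation_ge:
  fixes u :: "nat \<Rightarrow> real"
  assumes "(\<Sum>j<m. u j) = 1" "\<forall>j<m. u j \<le> u t"
  shows "1 \<le> real m * u t"
proof -
  have "(\<Sum>j<m. u j) \<le> (\<Sum>j<m. u t)"
    by (rule sum_mono) (use assms in auto)
  then show ?thesis
    using assms by simp
qed

lemma valuation_bounds:
  assumes ve: "valid_election m n k dst w v" and vt: "valid_top m n v tp" and "i < n" "j < m"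
  shows "0 \<le> v i j" "v i j \<le> 1" "j \<noteq> tp i \<Longrightarrow> v i j \<le> 1 / 2"
    "1 \<le> real m * v i (tp i)"
proof -
  have nonneg: "\<forall>j<m. 0 \<le> v i j" and total: "(\<Sum>j<m. v i j) = 1"
    using ve \<open>i < n\<close> unfolding valid_election_def by auto
  have top: "tp i < m" "\<forall>j<m. v i j \<le> v i (tp i)"
    using vt \<open>i < n\<close> unfolding valid_top_def by auto
  show "0 \<le> v i j" "v i j \<le> 1"
    using nonneg valuation_le_one[OF nonneg total] \<open>j < m\<close> by auto
  show "j \<noteq> tp i \<Longrightarrow> v i j \<le> 1 / 2"
    using valuation_le_half[OF nonneg total top(2,1) \<open>j < m\<close>] .
  show "1 \<le> real m * v i (tp i)"
    using top_valuation_ge[OF total top(2)] .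
qed

lemma sum_if_top_eq:
  "(\<Sum>i\<in>district_voters n dst d. if tp i = j then c else 0) = c * real (pcount n dst tp d j)"
proof -
  have "(\<Sum>i\<in>district_voters n dst d. if tp i = j then c else 0)
      = (\<Sum>i\<in>{i \<in> district_voters n dst d. tp i = j}. c)"
    by (rule sum.inter_filter[symmetric]) simp
  also have "{i \<in> district_voters n dst d. tp i = j} = {i. i < n \<and> dst i = d \<and> tp i = j}"
    unfolding district_voters_def by auto
  finally show ?thesis
    by (simp add: pcount_def)
qed

lemma sum_pcount:
  assumes "valid_top m n v tp"
  shows "(\<Sum>j<m. pcount n dst tp d j) = dsize n dst d"
proof -
  have "(\<Sum>j<m. \<Sum>i\<in>{i \<in> district_voters n dst d. tp i = j}. 1::nat) = (\<Sum>i\<in>district_voters n dst d. 1)"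
    by (rule sum.group) (use assms in \<open>auto simp: valid_top_def district_voters_def\<close>)
  moreover have "{i \<in> district_voters n dst d. tp i = j} = {i. i < n \<and> dst i = d \<and> tp i = j}" for j
    unfolding district_voters_def by auto
  ultimately show ?thesis
    by (simp add: pcount_def card_district_voters)
qed

lemma pcount_le_dsize:
  assumes "valid_top m n v tp" "j < m"
  shows "pcount n dst tp d j \<le> dsize n dst d"
  using member_le_sum[of j "{..<m}" "pcount n dst tp d"] sum_pcount[OF assms(1)] assms(2) by simp

lemma local_winner_pcount:
  assumes vt: "valid_top m n v tp" and lw: "valid_local_winners m n k dst tp lw"
    and "d < k" "j < m"
  shows "pcount n dst tp d j \<le> pcount n dst tp d (lw d)"
    and "dsize n dst d \<le> m * pcount n dst tp d (lw d)"
    and "j \<noteq> lw d \<Longrightarrow> 2 * pcount n dst tp d j \<le> dsize n dst d"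
proof -
  have winner: "lw d < m" "\<forall>j<m. pcount n dst tp d j \<le> pcount n dst tp d (lw d)"
    using lw \<open>d < k\<close> unfolding valid_local_winners_def by auto
  show le: "pcount n dst tp d j \<le> pcount n dst tp d (lw d)"
    using winner \<open>j < m\<close> by simp
  have "dsize n dst d = (\<Sum>j<m. pcount n dst tp d j)"
    using sum_pcount[OF vt] by simp
  also have "\<dots> \<le> (\<Sum>j<m. pcount n dst tp d (lw d))"
    by (rule sum_mono) (use winner in simp)
  finally show "dsize n dst d \<le> m * pcount n dst tp d (lw d)"
    by simp
  assume "j \<noteq> lw d"
  then have "pcount n dst tp d j + pcount n dst tp d (lw d) = (\<Sum>j'\<in>{j, lw d}. pcount n dst tp d j')"
    by simp
  also have "\<dots> \<le> (\<Sum>j'<m. pcount n dst tp d j')"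
    by (rule sum_mono2) (use winner \<open>j < m\<close> in auto)
  finally show "2 * pcount n dst tp d j \<le> dsize n dst d"
    using sum_pcount[OF vt] le by simp
qed

definition district_welfare ::
  "nat \<Rightarrow> (nat \<Rightarrow> nat) \<Rightarrow> (nat \<Rightarrow> nat \<Rightarrow> real) \<Rightarrow> nat \<Rightarrow> nat \<Rightarrow> real" where
  "district_welfare n dst v d j = (\<Sum>i\<in>district_voters n dst d. v i j)"

definition top_welfare ::
  "nat \<Rightarrow> (nat \<Rightarrow> nat) \<Rightarrow> (nat \<Rightarrow> nat \<Rightarrow> real) \<Rightarrow> (nat \<Rightarrow> nat) \<Rightarrow> nat \<Rightarrow> nat \<Rightarrow> real" where
  "top_welfare n dst v tp d a = (\<Sum>i\<in>district_voters n dst d. if tp i = a then v i a else 0)"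

lemma SW_eq_sum_district_welfare:
  assumes "valid_election m n k dst w v"
  shows "SW n v j = (\<Sum>d<k. district_welfare n dst v d j)"
  unfolding SW_def district_welfare_def by (rule sum_over_districts[OF assms])

lemma top_welfare_le_district_welfare:
  assumes "valid_election m n k dst w v" "valid_top m n v tp" "a < m"
  shows "top_welfare n dst v tp d a \<le> district_welfare n dst v d a"
  unfolding top_welfare_def district_welfare_def
  by (rule sum_mono) (use valuation_bounds(1)[OF assms(1,2) _ assms(3)] in \<open>auto simp: district_voters_def\<close>)

lemma pcount_div_le_top_welfare:
  assumes ve: "valid_election m n k dst w v" and vt: "valid_top m n v tp" and "a < m"
  shows "real (pcount n dst tp d a) / real m \<le> top_welfare n dst v tp d a"
proof -
  have "(\<Sum>i\<in>district_voters n dst d. if tp i = a then 1 / real m else 0) \<le> top_welfare n dst v tp d a"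
    unfolding top_welfare_def
  proof (rule sum_mono)
    fix i
    assume "i \<in> district_voters n dst d"
    then have "1 \<le> real m * v i (tp i)"
      using valuation_bounds(4)[OF ve vt _ \<open>a < m\<close>] by (simp add: district_voters_def)
    then show "(if tp i = a then 1 / real m else 0) \<le> (if tp i = a then v i a else 0)"
      using \<open>a < m\<close> by (auto simp: divide_le_eq mult.commute)
  qed
  then show ?thesis
    by (simp add: sum_if_top_eq)
qed

lemma district_welfare_le:
  assumes ve: "valid_election m n k dst w v" and vt: "valid_top m n v tp" and "j < m"
  shows "district_welfare n dst v d j \<le> (real (dsize n dst d) + real (pcount n dst tp d j)) / 2"
proof -
  have "district_welfare n dst v d j
      \<le> (\<Sum>i\<in>district_voters n dst d. 1 / 2 + (if tp i = j then 1 / 2 else 0))"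
    unfolding district_welfare_def
  proof (rule sum_mono)
    fix i
    assume "i \<in> district_voters n dst d"
    then show "v i j \<le> 1 / 2 + (if tp i = j then 1 / 2 else 0)"
      using valuation_bounds(2,3)[OF ve vt _ \<open>j < m\<close>] by (auto simp: district_voters_def)
  qed
  then show ?thesis
    by (simp add: sum.distrib sum_if_top_eq card_district_voters)
qed

lemma district_welfare_le_top_welfare:
  assumes ve: "valid_election m n k dst w v" and vt: "valid_top m n v tp"
    and "j < m" "a < m" "j \<noteq> a"
  shows "district_welfare n dst v d j \<le> top_welfare n dst v tp d a
    + (real (dsize n dst d) + real (pcount n dst tp d j) - real (pcount n dst tp d a)) / 2"
proof -
  have "district_welfare n dst v d j \<le> (\<Sum>i\<in>district_voters n dst d.
      (if tp i = a then v i a else 0) + 1 / 2 + (if tp i = j then 1 / 2 else 0) + (if tp i = a then - 1 / 2 else 0))"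
    unfolding district_welfare_def
  proof (rule sum_mono)
    fix i
    assume "i \<in> district_voters n dst d"
    then have "i < n"
      by (simp add: district_voters_def)
    have "v i j \<le> v i (tp i)"
      using vt \<open>i < n\<close> \<open>j < m\<close> unfolding valid_top_def by simp
    then show "v i j \<le> (if tp i = a then v i a else 0) + 1 / 2 + (if tp i = j then 1 / 2 else 0)
        + (if tp i = a then - 1 / 2 else 0)"
      using valuation_bounds(2,3)[OF ve vt \<open>i < n\<close> \<open>j < m\<close>] \<open>j \<noteq> a\<close> by auto
  qed
  also have "\<dots> = top_welfare n dst v tp d a + real (dsize n dst d) / 2
      + real (pcount n dst tp d j) / 2 - real (pcount n dst tp d a) / 2"
    by (simp only: sum.distrib) (simp add: sum_if_top_eq card_district_voters top_welfare_def)
  finally show ?thesis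
    by (simp add: field_simps)
qed

lemma district_welfare_le_local:
  assumes ve: "valid_election m n k dst w v" and vt: "valid_top m n v tp"
    and lw: "valid_local_winners m n k dst tp lw" and "d < k" "j < m" "a < m" "j \<noteq> a"
  shows "district_welfare n dst v d j \<le> (if lw d = a then top_welfare n dst v tp d a else 0)
    + (3 * real (dsize n dst d) - (if lw d = a then real (dsize n dst d) else 0)
       + (if lw d = j then real (dsize n dst d) else 0)) / 4"
proof -
  note counts = local_winner_pcount[OF vt lw \<open>d < k\<close> \<open>j < m\<close>]
  consider "lw d = a" | "lw d = j" | "lw d \<noteq> a" "lw d \<noteq> j"
    by blast
  then show ?thesis
  proof cases
    case 1
    then show ?thesis
      using district_welfare_le_top_welfare[OF ve vt \<open>j < m\<close> \<open>a < m\<close> \<open>j \<noteq> a\<close>, of d]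
        of_nat_mono[OF counts(1)] \<open>j \<noteq> a\<close> by (simp add: field_simps)
  next
    case 2
    then show ?thesis
      using district_welfare_le[OF ve vt \<open>j < m\<close>, of d] pcount_le_dsize[OF vt \<open>j < m\<close>, of dst d]
        \<open>j \<noteq> a\<close> by simp
  next
    case 3
    then show ?thesis
      using district_welfare_le[OF ve vt \<open>j < m\<close>, of d] counts(3) by simp
  qed
qed

definition won_size ::
  "nat \<Rightarrow> nat \<Rightarrow> (nat \<Rightarrow> nat) \<Rightarrow> (nat \<Rightarrow> nat) \<Rightarrow> nat \<Rightarrow> real" where
  "won_size n k dst lw j = (\<Sum>d<k. if lw d = j then real (dsize n dst d) else 0)"

lemma won_size_eq_sum_won:
  "won_size n k dst lw j = (\<Sum>d\<in>{d. d < k \<and> lw d = j}. real (dsize n dst d))"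
proof -
  have "{d \<in> {..<k}. lw d = j} = {d. d < k \<and> lw d = j}"
    by auto
  then show ?thesis
    unfolding won_size_def by (simp flip: sum.inter_filter)
qed

lemma dsize_le_won_size:
  assumes "d < k" "lw d = j"
  shows "real (dsize n dst d) \<le> won_size n k dst lw j"
  unfolding won_size_def
  using member_le_sum[of d "{..<k}" "\<lambda>d. if lw d = j then real (dsize n dst d) else 0"] assms
  by simp

lemma won_size_add_le:
  assumes "valid_election m n k dst w v" "j \<noteq> a"
  shows "won_size n k dst lw a + won_size n k dst lw j \<le> real n"
proof -
  have "won_size n k dst lw a + won_size n k dst lw j
      = (\<Sum>d<k. (if lw d = a then real (dsize n dst d) else 0) + (if lw d = j then real (dsize n dst d) else 0))"
    unfolding won_size_def by (simp add: sum.distrib)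
  also have "\<dots> \<le> (\<Sum>d<k. real (dsize n dst d))"
    by (rule sum_mono) (use assms(2) in auto)
  finally show ?thesis
    using sum_dsize[OF assms(1)] by simp
qed

lemma won_size_le:
  assumes "valid_election m n k dst w v"
  shows "won_size n k dst lw j \<le> real n"
proof -
  have "won_size n k dst lw j \<le> (\<Sum>d<k. real (dsize n dst d))"
    unfolding won_size_def by (rule sum_mono) auto
  then show ?thesis
    using sum_dsize[OF assms] by simp
qed

lemma sum_won_top_welfare_le_SW:
  assumes ve: "valid_election m n k dst w v" and vt: "valid_top m n v tp" and "a < m"
  shows "(\<Sum>d<k. if lw d = a then top_welfare n dst v tp d a else 0) \<le> SW n v a"
proof -
  have "(\<Sum>d<k. if lw d = a then top_welfare n dst v tp d a else 0) \<le> (\<Sum>d<k. district_welfare n dst v d a)"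
  proof (rule sum_mono)
    fix d
    have "0 \<le> district_welfare n dst v d a"
      unfolding district_welfare_def
      by (rule sum_nonneg) (use valuation_bounds(1)[OF ve vt _ \<open>a < m\<close>] in \<open>auto simp: district_voters_def\<close>)
    then show "(if lw d = a then top_welfare n dst v tp d a else 0) \<le> district_welfare n dst v d a"
      using top_welfare_le_district_welfare[OF ve vt \<open>a < m\<close>] by simp
  qed
  then show ?thesis
    by (simp add: SW_eq_sum_district_welfare[OF ve])
qed

text \<open>Every voter of a district won by \<open>a\<close> values \<open>a\<close> at least \<open>1/m\<close> if she ranks it first,
  and at least a \<open>1/m\<close> fraction of the district does.\<close>

lemma won_size_le_SW:
  assumes ve: "valid_election m n k dst w v" and vt: "valid_top m n v tp"
    and lw: "valid_local_winners m n k dst tp lw" and "a < m"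
  shows "won_size n k dst lw a / real m ^ 2 \<le> SW n v a"
proof -
  have "won_size n k dst lw a / real m ^ 2 = (\<Sum>d<k. if lw d = a then real (dsize n dst d) / real m ^ 2 else 0)"
    unfolding won_size_def sum_divide_distrib by (intro sum.cong) auto
  also have "\<dots> \<le> (\<Sum>d<k. if lw d = a then top_welfare n dst v tp d a else 0)"
  proof (rule sum_mono)
    fix d
    assume "d \<in> {..<k}"
    have "real (dsize n dst d) / real m ^ 2 \<le> top_welfare n dst v tp d a" if "lw d = a"
    proof -
      have "real (dsize n dst d) \<le> real m * real (pcount n dst tp d a)"
        using local_winner_pcount(2)[OF vt lw, of d a] \<open>d \<in> {..<k}\<close> \<open>a < m\<close> that
        by (simp flip: of_nat_mult)
      then have "real (dsize n dst d) / real m ^ 2 \<le> real (pcount n dst tp d a) / real m"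
        using \<open>a < m\<close> by (simp add: power2_eq_square field_simps)
      also have "\<dots> \<le> top_welfare n dst v tp d a"
        by (rule pcount_div_le_top_welfare[OF ve vt \<open>a < m\<close>])
      finally show ?thesis .
    qed
    then show "(if lw d = a then real (dsize n dst d) / real m ^ 2 else 0)
        \<le> (if lw d = a then top_welfare n dst v tp d a else 0)"
      by simp
  qed
  also have "\<dots> \<le> SW n v a"
    by (rule sum_won_top_welfare_le_SW[OF ve vt \<open>a < m\<close>])
  finally show ?thesis .
qed

lemma SW_le_SW_add_won_size:
  assumes ve: "valid_election m n k dst w v" and vt: "valid_top m n v tp"
    and lw: "valid_local_winners m n k dst tp lw" and "j < m" "a < m" "j \<noteq> a"
  shows "SW n v j \<le> SW n v a + (3 * real n - won_size n k dst lw a + won_size n k dst lw j) / 4"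
proof -
  let ?nd = "\<lambda>d. real (dsize n dst d)"
  have "SW n v j \<le> (\<Sum>d<k. (if lw d = a then top_welfare n dst v tp d a else 0)
      + (3 * ?nd d - (if lw d = a then ?nd d else 0) + (if lw d = j then ?nd d else 0)) / 4)"
    unfolding SW_eq_sum_district_welfare[OF ve]
    by (rule sum_mono) (use district_welfare_le_local[OF ve vt lw _ assms(4-6)] in simp)
  also have "\<dots> = (\<Sum>d<k. if lw d = a then top_welfare n dst v tp d a else 0)
      + (3 * real n - won_size n k dst lw a + won_size n k dst lw j) / 4"
    by (simp add: sum.distrib sum_subtractf won_size_def sum_dsize[OF ve] flip: sum_divide_distrib
        sum_distrib_left)
  also have "\<dots> \<le> SW n v a + (3 * real n - won_size n k dst lw a + won_size n k dst lw j) / 4"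
    using sum_won_top_welfare_le_SW[OF ve vt \<open>a < m\<close>] by simp
  finally show ?thesis .
qed

lemma ratio_le:
  assumes "a < m" and gap: "\<forall>j<m. j \<noteq> a \<longrightarrow> SW n v j \<le> SW n v a + X"
    and "0 < L" "L \<le> SW n v a" "0 \<le> X"
  shows "ratio m n v a \<le> 1 + X / L"
proof -
  have "Max ((\<lambda>j. SW n v j) ` {..<m}) \<in> (\<lambda>j. SW n v j) ` {..<m}"
    by (rule Max_in) (use \<open>a < m\<close> in auto)
  then obtain j where j: "j < m" "Max ((\<lambda>j. SW n v j) ` {..<m}) = SW n v j"
    by auto
  have "SW n v j \<le> SW n v a + X"
    using gap j \<open>0 \<le> X\<close> by (cases "j = a") auto
  then have "ratio m n v a \<le> (SW n v a + X) / SW n v a"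
    unfolding ratio_def j(2) using assms by (simp add: divide_right_mono)
  also have "\<dots> = 1 + X / SW n v a"
    using assms by (simp add: field_simps)
  also have "\<dots> \<le> 1 + X / L"
    using assms by (simp add: divide_left_mono)
  finally show ?thesis .
qed

lemma winner_wins_district:
  assumes "valid_election m n k dst w v" "pv_outcome m n k dst w v tp lw a"
  shows "\<exists>d<k. lw d = a"
proof (rule ccontr)
  assume "\<not> (\<exists>d<k. lw d = a)"
  then have "wscore k w lw a = 0"
    unfolding wscore_def by (intro sum.neutral) auto
  have "0 < k" and wpos: "\<forall>d<k. 0 < w d"
    using assms(1) unfolding valid_election_def by auto
  moreover have "lw 0 < m" "\<forall>j<m. wscore k w lw j \<le> wscore k w lw a"
    using assms(2) \<open>0 < k\<close> unfolding pv_outcome_def valid_local_winners_def by auto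
  moreover have "w 0 \<le> wscore k w lw (lw 0)"
    unfolding wscore_def
    using member_le_sum[of 0 "{..<k}" "\<lambda>d. if lw d = lw 0 then w d else 0"] \<open>0 < k\<close> wpos
    by (simp add: less_imp_le)
  ultimately show False
    using \<open>wscore k w lw a = 0\<close> by (metis not_le order.trans)
qed

lemma won_size_bounds:
  "real (card {d. d < k \<and> lw d = j}) * real (min_size n k dst) \<le> won_size n k dst lw j"
  "won_size n k dst lw j \<le> real (card {d. d < k \<and> lw d = j}) * real (max_size n k dst)"
  unfolding won_size_eq_sum_won
  using sum_mono[of "{d. d < k \<and> lw d = j}" "\<lambda>_. real (min_size n k dst)" "\<lambda>d. real (dsize n dst d)"]
    sum_mono[of "{d. d < k \<and> lw d = j}" "\<lambda>d. real (dsize n dst d)" "\<lambda>_. real (max_size n k dst)"]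
    min_size_le_dsize dsize_le_max_size
  by auto

lemma wscore_unweighted:
  assumes "unweighted k w"
  shows "wscore k w lw j = real (card {d. d < k \<and> lw d = j})"
proof -
  have "wscore k w lw j = (\<Sum>d<k. if lw d = j then 1 else 0)"
    using assms unfolding wscore_def unweighted_def by (intro sum.cong) auto
  also have "\<dots> = (\<Sum>d\<in>{d \<in> {..<k}. lw d = j}. 1)"
    by (rule sum.inter_filter[symmetric]) simp
  finally show ?thesis
    by simp
qed

theorem ratio_le_unrestricted:
  assumes ve: "valid_election m n k dst w v" and po: "pv_outcome m n k dst w v tp lw a"
  shows "ratio m n v a \<le> 1 + real m ^ 2 * (real n / real (min_size n k dst) - 1 / 2)"
proof -
  have vt: "valid_top m n v tp" and lw: "valid_local_winners m n k dst tp lw" and "a < m"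
    using po unfolding pv_outcome_def by auto
  define N where "N = won_size n k dst lw a"
  obtain d where "d < k" "lw d = a"
    using winner_wins_district[OF ve po] by blast
  have "0 < real (min_size n k dst)"
    using min_size_pos[OF ve] by simp
  moreover have min_le_N: "real (min_size n k dst) \<le> N"
  proof -
    have "real (min_size n k dst) \<le> real (dsize n dst d)"
      using min_size_le_dsize[OF \<open>d < k\<close>] by simp
    also have "\<dots> \<le> N"
      unfolding N_def by (rule dsize_le_won_size) fact+
    finally show ?thesis .
  qed
  ultimately have "0 < N"
    by linarith
  have gap: "\<forall>j<m. j \<noteq> a \<longrightarrow> SW n v j \<le> SW n v a + (real n - N / 2)"
  proof (intro allI impI)
    fix j
    assume "j < m" "j \<noteq> a"
    then show "SW n v j \<le> SW n v a + (real n - N / 2)"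
      using SW_le_SW_add_won_size[OF ve vt lw \<open>j < m\<close> \<open>a < m\<close> \<open>j \<noteq> a\<close>]
        won_size_add_le[OF ve \<open>j \<noteq> a\<close>, of lw] unfolding N_def by (simp add: field_simps)
  qed
  have "ratio m n v a \<le> 1 + (real n - N / 2) / (N / real m ^ 2)"
    by (rule ratio_le[OF \<open>a < m\<close> gap])
      (use \<open>0 < N\<close> \<open>a < m\<close> won_size_le_SW[OF ve vt lw \<open>a < m\<close>] won_size_le[OF ve, of lw a] in
       \<open>auto simp: N_def\<close>)
  also have "\<dots> = 1 + real m ^ 2 * (real n / N - 1 / 2)"
    using \<open>0 < N\<close> by (simp add: field_simps)
  also have "\<dots> \<le> 1 + real m ^ 2 * (real n / real (min_size n k dst) - 1 / 2)"
    using \<open>0 < real (min_size n k dst)\<close> min_le_N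
    by (intro add_left_mono mult_left_mono diff_right_mono divide_left_mono) auto
  finally show ?thesis .
qed

lemma unweighted_gap_le:
  fixes n N t mn mx :: real
  assumes "0 < mn" "1 \<le> t" "t * mn \<le> N" "0 \<le> n" "0 \<le> mx"
  shows "(3 * n - N + t * mx) / N \<le> (3 * n + mx) / mn - 1"
proof -
  have "0 < t * mn"
    using assms by simp
  then have "0 < N"
    using assms by linarith
  have "(3 * n - N + t * mx) / N = (3 * n + t * mx) / N - 1"
    using \<open>0 < N\<close> by (simp add: field_simps)
  also have "(3 * n + t * mx) / N \<le> (3 * n + t * mx) / (t * mn)"
    using assms \<open>0 < t * mn\<close> \<open>0 < N\<close> by (intro divide_left_mono) auto
  also have "\<dots> = 3 * n / (t * mn) + mx / mn"
    using assms by (simp add: field_simps)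
  also have "3 * n / (t * mn) \<le> 3 * n / mn"
    using assms by (intro divide_left_mono) auto
  finally show ?thesis
    by (simp add: add_divide_distrib)
qed

lemma won_size_le_card_won_max_size:
  assumes "unweighted k w" "pv_outcome m n k dst w v tp lw a" "j < m"
  shows "won_size n k dst lw j \<le> real (card {d. d < k \<and> lw d = a}) * real (max_size n k dst)"
proof -
  have "real (card {d. d < k \<and> lw d = j}) \<le> real (card {d. d < k \<and> lw d = a})"
    using assms unfolding pv_outcome_def wscore_unweighted[OF assms(1)] by blast
  then have "real (card {d. d < k \<and> lw d = j}) * real (max_size n k dst)
      \<le> real (card {d. d < k \<and> lw d = a}) * real (max_size n k dst)"
    by (simp add: mult_right_mono)
  then show ?thesis
    using won_size_bounds(2)[of n k dst lw j] by linarith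
qed

theorem ratio_le_unweighted:
  assumes ve: "valid_election m n k dst w v" and uw: "unweighted k w"
    and po: "pv_outcome m n k dst w v tp lw a"
  shows "ratio m n v a \<le> 1 + real m ^ 2 / 4 *
    ((3 * real n + real (max_size n k dst)) / real (min_size n k dst) - 1)"
proof -
  have vt: "valid_top m n v tp" and lw: "valid_local_winners m n k dst tp lw" and "a < m"
    using po unfolding pv_outcome_def by auto
  define N where "N = won_size n k dst lw a"
  define t where "t = real (card {d. d < k \<and> lw d = a})"
  let ?mn = "real (min_size n k dst)" and ?mx = "real (max_size n k dst)"
  have "{d. d < k \<and> lw d = a} \<noteq> {}"
    using winner_wins_district[OF ve po] by blast
  then have "1 \<le> t"
    unfolding t_def by (simp add: Suc_le_eq card_gt_0_iff)
  have "0 < ?mn"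
    using min_size_pos[OF ve] by simp
  have N_ge: "t * ?mn \<le> N"
    using won_size_bounds(1) unfolding N_def t_def .
  have "0 < t * ?mn"
    using \<open>0 < ?mn\<close> \<open>1 \<le> t\<close> by simp
  then have "0 < N"
    using N_ge by linarith
  have gap: "\<forall>j<m. j \<noteq> a \<longrightarrow> SW n v j \<le> SW n v a + (3 * real n - N + t * ?mx) / 4"
  proof (intro allI impI)
    fix j
    assume "j < m" "j \<noteq> a"
    then show "SW n v j \<le> SW n v a + (3 * real n - N + t * ?mx) / 4"
      using SW_le_SW_add_won_size[OF ve vt lw \<open>j < m\<close> \<open>a < m\<close> \<open>j \<noteq> a\<close>]
        won_size_le_card_won_max_size[OF uw po \<open>j < m\<close>]
      unfolding N_def t_def by (simp add: field_simps)
  qed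
  have "ratio m n v a \<le> 1 + (3 * real n - N + t * ?mx) / 4 / (N / real m ^ 2)"
    by (rule ratio_le[OF \<open>a < m\<close> gap])
      (use \<open>0 < N\<close> \<open>a < m\<close> \<open>1 \<le> t\<close> won_size_le_SW[OF ve vt lw \<open>a < m\<close>] won_size_le[OF ve, of lw a] in
       \<open>auto simp: N_def\<close>)
  also have "\<dots> = 1 + real m ^ 2 / 4 * ((3 * real n - N + t * ?mx) / N)"
    using \<open>0 < N\<close> by (simp add: field_simps)
  also have "\<dots> \<le> 1 + real m ^ 2 / 4 * ((3 * real n + ?mx) / ?mn - 1)"
    using unweighted_gap_le[OF \<open>0 < ?mn\<close> \<open>1 \<le> t\<close> N_ge, of "real n" ?mx]
    by (intro add_left_mono mult_left_mono) auto
  finally show ?thesis .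
qed

theorem ratio_le_symmetric:
  assumes ve: "valid_election m n k dst w v" and sym: "symmetric n k dst w"
    and po: "pv_outcome m n k dst w v tp lw a"
  shows "ratio m n v a \<le> 1 + 3 * real m ^ 2 * real k / 4"
proof -
  have uw: "unweighted k w" and sizes: "\<forall>d<k. dsize n dst d * k = n"
    using sym unfolding symmetric_def by auto
  have "0 < k"
    using ve unfolding valid_election_def by simp
  have each: "\<forall>d<k. dsize n dst d = n div k"
    using sizes \<open>0 < k\<close> by (metis nonzero_mult_div_cancel_right not_gr0)
  then have "(\<lambda>d. dsize n dst d) ` {..<k} = {n div k}"
    using \<open>0 < k\<close> by force
  then have "min_size n k dst = n div k" "max_size n k dst = n div k"
    unfolding min_size_def max_size_def by simp_all
  moreover have "n div k * k = n"
    using sizes each \<open>0 < k\<close> by metis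
  moreover have "0 < min_size n k dst"
    using min_size_pos[OF ve] .
  ultimately have "(3 * real n + real (max_size n k dst)) / real (min_size n k dst) - 1 = 3 * real k"
    by (simp add: field_simps flip: of_nat_mult)
  then show ?thesis
    using ratio_le_unweighted[OF ve uw po] by simp
qed

section \<open>Profiles attaining the bounds\<close>

lemma sum_div_blocks:
  fixes f :: "nat \<Rightarrow> 'a::comm_semiring_1"
  shows "(\<Sum>p<m * q. f (p div q)) = of_nat q * (\<Sum>b<m. f b)"
proof (cases "q = 0")
  case False
  have "(\<Sum>p<m * q. f (p div q)) = (\<Sum>b<m. \<Sum>p\<in>{b * q..<b * q + q}. f (p div q))"
    by (rule sum.nat_group[symmetric])
  also have "\<dots> = (\<Sum>b<m. \<Sum>p\<in>{b * q..<b * q + q}. f b)"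
  proof (intro sum.cong refl)
    fix b p
    assume "p \<in> {b * q..<b * q + q}"
    then have "p div q = b"
      using False by (simp add: div_nat_eqI mult.commute)
    then show "f (p div q) = f b"
      by simp
  qed
  finally show ?thesis
    by (simp add: sum_distrib_left)
qed simp

lemma sum_mod_2:
  fixes f :: "nat \<Rightarrow> 'a::comm_semiring_1"
  assumes "even s"
  shows "(\<Sum>p<s. f (p mod 2)) = of_nat (s div 2) * (f 0 + f 1)"
proof -
  have "(\<Sum>p<s. f (p mod 2)) = (\<Sum>p<s div 2 * 2. f (p mod 2))"
    using assms by simp
  also have "\<dots> = (\<Sum>b<s div 2. \<Sum>p\<in>{b * 2..<b * 2 + 2}. f (p mod 2))"
    by (rule sum.nat_group[symmetric])
  also have "\<dots> = (\<Sum>b<s div 2. f 0 + f 1)"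
  proof (intro sum.cong refl)
    fix b :: nat
    have "{b * 2..<b * 2 + 2} = {b * 2, Suc (b * 2)}"
      by auto
    moreover have "Suc (b * 2) mod 2 = 1"
      by presburger
    ultimately show "(\<Sum>p\<in>{b * 2..<b * 2 + 2}. f (p mod 2)) = f 0 + f 1"
      by simp
  qed
  finally show ?thesis
    by simp
qed

lemma card_eq_sum_indicator:
  fixes s :: nat
  shows "card {p. p < s \<and> P p} = (\<Sum>p<s. if P p then 1 else 0)"
proof -
  have "(\<Sum>p<s. if P p then 1 else 0) = (\<Sum>p\<in>{p \<in> {..<s}. P p}. 1::nat)"
    by (rule sum.inter_filter[symmetric]) simp
  then show ?thesis
    by simp
qed

lemma card_div_blocks: "card {p. p < m * q \<and> p div q = j} = (if j < m then q else 0)"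
  unfolding card_eq_sum_indicator
  using sum_div_blocks[where f = "\<lambda>b. if b = j then 1::nat else 0" and m = m and q = q]
  by simp

lemma card_mod_2:
  assumes "even s"
  shows "card {p. p < s \<and> P (p mod 2)} = s div 2 * ((if P 0 then 1 else 0) + (if P 1 then 1 else 0))"
  unfolding card_eq_sum_indicator using sum_mod_2[OF assms, of "\<lambda>b. if P b then 1::nat else 0"] by simp

text \<open>A layout numbers the voters so that voter \<open>i\<close> is the \<open>pos i\<close>-th voter of district \<open>dst i\<close>,
  district \<open>l\<close> having \<open>s l\<close> voters; profiles are then specified per (district, position).\<close>

definition district_layout ::
  "nat \<Rightarrow> nat \<Rightarrow> (nat \<Rightarrow> nat) \<Rightarrow> (nat \<Rightarrow> nat) \<Rightarrow> (nat \<Rightarrow> nat) \<Rightarrow> bool" where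
  "district_layout n k s dst pos \<longleftrightarrow>
    bij_betw (\<lambda>i. (dst i, pos i)) {..<n} (SIGMA l:{..<k}. {..<s l})"

lemma ex_district_layout: "\<exists>dst pos. district_layout (\<Sum>l<k. s l) k s dst pos"
proof -
  let ?M = "SIGMA l:{..<k}. {..<s l}"
  obtain h where "bij_betw h {0..<card ?M} ?M"
    using ex_bij_betw_nat_finite[of ?M] by auto
  moreover have "card ?M = (\<Sum>l<k. s l)"
    by simp
  ultimately have "district_layout (\<Sum>l<k. s l) k s (\<lambda>i. fst (h i)) (\<lambda>i. snd (h i))"
    unfolding district_layout_def by (simp add: atLeast0LessThan)
  then show ?thesis
    by blast
qed

context
  fixes n k s dst pos
  assumes layout: "district_layout n k s dst pos"
begin

lemma district_layout_range: "i < n \<Longrightarrow> dst i < k \<and> pos i < s (dst i)"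
  using layout unfolding district_layout_def bij_betw_def by auto

lemma district_layout_onto:
  assumes "d < k" "p < s d"
  shows "\<exists>i<n. dst i = d \<and> pos i = p"
proof -
  have "(d, p) \<in> (\<lambda>i. (dst i, pos i)) ` {..<n}"
    using layout assms unfolding district_layout_def bij_betw_def by auto
  then show ?thesis
    by auto
qed

lemma sum_district_layout: "(\<Sum>i<n. F (dst i) (pos i)) = (\<Sum>l<k. \<Sum>p<s l. F l p)"
proof -
  have "(\<Sum>i<n. F (dst i) (pos i)) = (\<Sum>x\<in>(SIGMA l:{..<k}. {..<s l}). case_prod F x)"
    using sum.reindex_bij_betw[OF layout[unfolded district_layout_def], of "case_prod F"] by simp
  also have "\<dots> = (\<Sum>l<k. \<Sum>p<s l. F l p)"
    by (rule sum.Sigma[symmetric]) auto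
  finally show ?thesis .
qed

lemma card_district_layout:
  assumes "d < k"
  shows "card {i. i < n \<and> dst i = d \<and> Q (pos i)} = card {p. p < s d \<and> Q p}"
proof -
  have "card {i. i < n \<and> dst i = d \<and> Q (pos i)} = (\<Sum>i<n. if dst i = d \<and> Q (pos i) then 1 else 0)"
    by (rule card_eq_sum_indicator)
  also have "\<dots> = (\<Sum>l<k. \<Sum>p<s l. if l = d \<and> Q p then 1 else 0)"
    by (rule sum_district_layout)
  also have "\<dots> = (\<Sum>l<k. if l = d then (\<Sum>p<s l. if Q p then 1 else 0) else 0)"
    by (intro sum.cong) auto
  also have "\<dots> = (\<Sum>p<s d. if Q p then 1 else 0)"
    using assms by simp
  also have "\<dots> = card {p. p < s d \<and> Q p}"
    by (rule card_eq_sum_indicator[symmetric])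
  finally show ?thesis .
qed

lemma dsize_district_layout: "d < k \<Longrightarrow> dsize n dst d = s d"
  using card_district_layout[of d "\<lambda>_. True"] unfolding dsize_def by simp

lemma pcount_district_layout:
  assumes "d < k"
  shows "pcount n dst (\<lambda>i. T (dst i) (pos i)) d j = card {p. p < s d \<and> T d p = j}"
proof -
  have "{i. i < n \<and> dst i = d \<and> T (dst i) (pos i) = j} = {i. i < n \<and> dst i = d \<and> T d (pos i) = j}"
    by auto
  then show ?thesis
    unfolding pcount_def using card_district_layout[OF assms, of "\<lambda>p. T d p = j"] by simp
qed

lemma SW_district_layout: "SW n (\<lambda>i. V (dst i) (pos i)) j = (\<Sum>l<k. \<Sum>p<s l. V l p j)"
  unfolding SW_def by (rule sum_district_layout)

end

text \<open>Voter types of the lower-bound profiles: type 0 is indifferent among all alternatives,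
  type 1 puts all value on alternative 1, and type \<open>b \<ge> 2\<close> splits it equally between \<open>b\<close> and 1.
  Alternative 1 is thus a best alternative for every type, while only type 0 values alternative 0.\<close>

definition type_val :: "nat \<Rightarrow> nat \<Rightarrow> nat \<Rightarrow> real" where
  "type_val m b j =
    (if b = 0 then 1 / real m
     else if b = 1 then (if j = 1 then 1 else 0)
     else if j = b \<or> j = 1 then 1 / 2 else 0)"

lemma type_val_nonneg: "0 \<le> type_val m b j"
  unfolding type_val_def by auto

lemma sum_type_val:
  assumes "2 \<le> m" "b < m"
  shows "(\<Sum>j<m. type_val m b j) = 1"
proof -
  consider "b = 0" | "b = 1" | "2 \<le> b"
    by linarith
  then show ?thesis
  proof cases
    case 3
    then have "(\<Sum>j<m. type_val m b j) = (\<Sum>j<m. (if j = b then 1 / 2 else 0) + (if j = 1 then 1 / 2 else 0))"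
      by (intro sum.cong) (auto simp: type_val_def)
    then show ?thesis
      using assms 3 by (simp add: sum.distrib)
  qed (use assms in \<open>simp_all add: type_val_def\<close>)
qed

lemma type_val_le_own: "type_val m b j \<le> type_val m b b"
  unfolding type_val_def by auto

lemma type_val_le_one: "type_val m b j \<le> type_val m b 1"
  unfolding type_val_def by auto

lemma type_val_zero: "type_val m b 0 = (if b = 0 then 1 / real m else 0)"
  unfolding type_val_def by auto

lemma sum_mixed_block_zero:
  assumes "1 \<le> m"
  shows "(\<Sum>p<m * q. type_val m (p div q) 0) = real q / real m"
  using sum_div_blocks[where f = "\<lambda>b. type_val m b 0" and m = m and q = q] assms
  by (simp add: type_val_zero)

lemma sum_mixed_block_one:
  assumes "2 \<le> m"
  shows "(\<Sum>p<m * q. type_val m (p div q) 1) = real q * (1 / real m + real m / 2)"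
proof -
  have "(\<Sum>b<m. type_val m b 1)
      = (\<Sum>b<m. 1 / 2 + ((if b = 0 then 1 / real m - 1 / 2 else 0) + (if b = 1 then 1 / 2 else 0)))"
    by (intro sum.cong) (auto simp: type_val_def)
  also have "\<dots> = 1 / real m + real m / 2"
    using assms by (simp add: sum.distrib)
  finally show ?thesis
    using sum_div_blocks[where f = "\<lambda>b. type_val m b 1" and m = m and q = q] by simp
qed

lemma alternating_district:
  assumes "even s" "2 \<le> l"
  shows "(\<Sum>p<s. type_val m (if even p then l else 1) 1) = 3 * real s / 4"
    and "card {p. p < s \<and> (if even p then l else 1) = j} = (if j = l \<or> j = 1 then s div 2 else 0)"
proof -
  have "(\<Sum>p<s. type_val m (if even p then l else 1) 1) = (\<Sum>p<s. type_val m (if p mod 2 = 0 then l else 1) 1)"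
    by (simp add: even_iff_mod_2_eq_zero)
  also have "\<dots> = real (s div 2) * (1 / 2 + 1)"
    using sum_mod_2[OF assms(1), of "\<lambda>r. type_val m (if r = 0 then l else 1) 1"] assms(2)
    by (simp add: type_val_def)
  finally show "(\<Sum>p<s. type_val m (if even p then l else 1) 1) = 3 * real s / 4"
    using assms(1) by (simp add: real_of_nat_div)
  have "{p. p < s \<and> (if even p then l else 1) = j} = {p. p < s \<and> (if p mod 2 = 0 then l else 1) = j}"
    by (simp add: even_iff_mod_2_eq_zero)
  then show "card {p. p < s \<and> (if even p then l else 1) = j} = (if j = l \<or> j = 1 then s div 2 else 0)"
    using card_mod_2[OF assms(1), of "\<lambda>r. (if r = 0 then l else 1) = j"] assms(2) by auto
qed

lemma ratio_eq_of_max: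
  assumes "b < m" "\<forall>j<m. SW n v j \<le> SW n v b"
  shows "ratio m n v a = SW n v b / SW n v a"
proof -
  have "Max ((\<lambda>j. SW n v j) ` {..<m}) = SW n v b"
    by (rule Max_eqI) (use assms in auto)
  then show ?thesis
    unfolding ratio_def by simp
qed

lemma typed_profile:
  assumes layout: "district_layout n k s dst pos" and "1 \<le> k" "\<forall>l<k. 0 < s l" "2 \<le> m"
    and "\<forall>d<k. 0 < w d" and types: "\<And>l p. l < k \<Longrightarrow> p < s l \<Longrightarrow> T l p < m"
  defines "v \<equiv> \<lambda>i. type_val m (T (dst i) (pos i))"
  shows "valid_election m n k dst w v"
    and "valid_top m n v (\<lambda>i. T (dst i) (pos i))"
    and "\<forall>j<m. SW n v j \<le> SW n v 1"
proof -
  note range = district_layout_range[OF layout]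
  have "\<exists>i<n. dst i = d" if "d < k" for d
    using district_layout_onto[OF layout that, of 0] assms(3) that by auto
  then show "valid_election m n k dst w v"
    unfolding valid_election_def v_def
    using assms(2-5) range types
    by (auto simp: type_val_nonneg sum_type_val)
  show "valid_top m n v (\<lambda>i. T (dst i) (pos i))"
    unfolding valid_top_def v_def using range types by (auto intro: type_val_le_own)
  have "SW n v j = (\<Sum>l<k. \<Sum>p<s l. type_val m (T l p) j)" for j
    unfolding v_def using SW_district_layout[OF layout, of "\<lambda>l p. type_val m (T l p)" j] by simp
  then show "\<forall>j<m. SW n v j \<le> SW n v 1"
    by (simp only:) (intro allI impI sum_mono type_val_le_one)
qed

lemma SW_zero_typed_profile:
  assumes layout: "district_layout n k s dst pos" and "d0 < k" "s d0 = m * q" "1 \<le> m"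
    and "\<forall>p. T d0 p = p div q" and "\<forall>l<k. l \<noteq> d0 \<longrightarrow> (\<forall>p. T l p \<noteq> 0)"
  shows "SW n (\<lambda>i. type_val m (T (dst i) (pos i))) 0 = real q / real m"
proof -
  have "SW n (\<lambda>i. type_val m (T (dst i) (pos i))) 0 = (\<Sum>l<k. \<Sum>p<s l. type_val m (T l p) 0)"
    by (rule SW_district_layout[OF layout])
  also have "\<dots> = (\<Sum>l<k. if l = d0 then real q / real m else 0)"
    using assms(3-6) sum_mixed_block_zero[OF assms(4)] by (intro sum.cong) (auto simp: type_val_zero intro!: sum.neutral)
  also have "\<dots> = real q / real m"
    using assms(2) by simp
  finally show ?thesis .
qed

text \<open>District 0 (of size \<open>m q\<close>) contains \<open>q\<close> voters of each type, district 1 only voters of type 1,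
  and every other district \<open>l\<close> equally many voters of types \<open>l\<close> and 1, so that district \<open>l\<close> may
  elect \<open>l\<close> and the district count is a \<open>k\<close>-way tie. The ratio is attained whatever the sizes;
  only when district 0 is smallest and district 1 largest does it equal the upper bound.\<close>

definition unweighted_types :: "nat \<Rightarrow> nat \<Rightarrow> nat \<Rightarrow> nat" where
  "unweighted_types q l p = (if l = 0 then p div q else if l = 1 then 1 else if even p then l else 1)"

lemma unweighted_types_count_le:
  assumes "l < m" "j < m" "s 0 = m * q" "2 \<le> l \<Longrightarrow> even (s l)"
  shows "card {p. p < s l \<and> unweighted_types q l p = j} \<le> card {p. p < s l \<and> unweighted_types q l p = l}"
proof -
  consider "l = 0" | "l = 1" | "2 \<le> l"
    by linarith
  then show ?thesis
  proof cases
    case 1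
    then have "{p. p < s l \<and> unweighted_types q l p = j'} = {p. p < m * q \<and> p div q = j'}" for j'
      using assms(3) by (auto simp: unweighted_types_def)
    then show ?thesis
      using card_div_blocks[of m q] assms(1,2) 1 by simp
  next
    case 2
    then show ?thesis
      by (intro card_mono) (auto simp: unweighted_types_def)
  next
    case 3
    then have "{p. p < s l \<and> unweighted_types q l p = j'} = {p. p < s l \<and> (if even p then l else 1) = j'}"
      for j'
      by (auto simp: unweighted_types_def)
    then show ?thesis
      using alternating_district(2)[OF assms(4)[OF 3] 3] 3 by simp
  qed
qed

lemma unweighted_types_welfare_one:
  assumes "2 \<le> k" "2 \<le> m" "s 0 = m * q" "\<forall>l. 2 \<le> l \<and> l < k \<longrightarrow> even (s l)"
  shows "(\<Sum>l<k. \<Sum>p<s l. type_val m (unweighted_types q l p) 1)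
    = 3 * real (\<Sum>l<k. s l) / 4 + real q * (1 / real m + real m / 2) - 3 * real (s 0) / 4 + real (s 1) / 4"
proof -
  have "(\<Sum>p<s l. type_val m (unweighted_types q l p) 1)
      = 3 * real (s l) / 4 + (if l = 0 then real q * (1 / real m + real m / 2) - 3 * real (s 0) / 4 else 0)
        + (if l = 1 then real (s l) / 4 else 0)" if "l < k" for l
  proof -
    consider "l = 0" | "l = 1" | "2 \<le> l"
      by linarith
    then show ?thesis
    proof cases
      case 1
      then show ?thesis
        using sum_mixed_block_one[OF assms(2), of q] assms(3) by (simp add: unweighted_types_def)
    next
      case 2
      then show ?thesis
        by (simp add: unweighted_types_def type_val_def)
    next
      case 3
      then have "(\<Sum>p<s l. type_val m (unweighted_types q l p) 1) = (\<Sum>p<s l. type_val m (if even p then l else 1) 1)"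
        by (simp add: unweighted_types_def)
      then show ?thesis
        using alternating_district(1)[of "s l" l m] assms(4) \<open>l < k\<close> 3 by simp
    qed
  qed
  then have "(\<Sum>l<k. \<Sum>p<s l. type_val m (unweighted_types q l p) 1)
      = (\<Sum>l<k. 3 * real (s l) / 4 + (if l = 0 then real q * (1 / real m + real m / 2) - 3 * real (s 0) / 4 else 0)
        + (if l = 1 then real (s l) / 4 else 0))"
    by (intro sum.cong) auto
  also have "\<dots> = 3 * real (\<Sum>l<k. s l) / 4 + real q * (1 / real m + real m / 2) - 3 * real (s 0) / 4 + real (s 1) / 4"
    using assms(1) by (simp add: sum.distrib sum_divide_distrib[symmetric] sum_distrib_left[symmetric])
  finally show ?thesis .
qed

lemma unweighted_bound_attained:
  assumes "2 \<le> k" "k < m" "\<forall>l<k. 0 < s l" "m dvd s 0" and even: "\<forall>l. 2 \<le> l \<and> l < k \<longrightarrow> even (s l)"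
  shows "\<exists>dst w v tp lw a.
    valid_election m (\<Sum>l<k. s l) k dst w v \<and> unweighted k w \<and>
    (\<forall>l<k. dsize (\<Sum>l<k. s l) dst l = s l) \<and>
    pv_outcome m (\<Sum>l<k. s l) k dst w v tp lw a \<and>
    ratio m (\<Sum>l<k. s l) v a = 1 + real m ^ 2 / 4 * ((3 * real (\<Sum>l<k. s l) + real (s 1)) / real (s 0) - 1)"
proof -
  define n where "n = (\<Sum>l<k. s l)"
  define q where "q = s 0 div m"
  have "2 \<le> m" "s 0 = m * q"
    using assms unfolding q_def by auto
  moreover have "0 < s 0"
    using assms(1,3) by simp
  ultimately have "0 < q"
    by (metis nat_0_less_mult_iff)
  have "1 \<le> k"
    using assms(1) by simp
  obtain dst pos where layout: "district_layout n k s dst pos"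
    using ex_district_layout unfolding n_def by blast
  define T where "T = unweighted_types q"
  define v where "v = (\<lambda>i. type_val m (T (dst i) (pos i)))"
  define tp where "tp = (\<lambda>i. T (dst i) (pos i))"
  have types: "T l p < m" if "l < k" "p < s l" for l p
    using that assms(2) \<open>2 \<le> m\<close> \<open>0 < q\<close> \<open>s 0 = m * q\<close> unfolding T_def unweighted_types_def
    by (auto simp: div_less_iff_less_mult mult.commute)
  have profile: "valid_election m n k dst (\<lambda>_. 1) v" "valid_top m n v tp" "\<forall>j<m. SW n v j \<le> SW n v 1"
    using typed_profile[of n k s dst pos m "\<lambda>_. 1" T] layout \<open>1 \<le> k\<close> assms(3) \<open>2 \<le> m\<close> types
    unfolding v_def tp_def by auto
  have "valid_local_winners m n k dst tp id"
    unfolding valid_local_winners_def tp_def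
    using pcount_district_layout[OF layout] unweighted_types_count_le[of _ m _ s q] assms(2) even
      \<open>s 0 = m * q\<close> by (simp add: T_def)
  moreover have "wscore k (\<lambda>_. 1) id j = (if j < k then 1 else 0)" for j
    unfolding wscore_def by simp
  ultimately have outcome: "pv_outcome m n k dst (\<lambda>_. 1) v tp id 0"
    unfolding pv_outcome_def using profile(2) assms(1,2) by auto
  have SW0: "SW n v 0 = real q / real m"
    unfolding v_def
    by (rule SW_zero_typed_profile[OF layout _ \<open>s 0 = m * q\<close>]) (use assms in \<open>auto simp: T_def unweighted_types_def\<close>)
  have SW1: "SW n v 1 = 3 * real n / 4 + real q * (1 / real m + real m / 2) - 3 * real (s 0) / 4 + real (s 1) / 4"
    using SW_district_layout[OF layout, of "\<lambda>l p. type_val m (T l p)" 1]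
      unweighted_types_welfare_one[OF assms(1) \<open>2 \<le> m\<close> \<open>s 0 = m * q\<close> even]
    unfolding v_def T_def n_def by simp
  have "ratio m n v 0 = SW n v 1 / SW n v 0"
    by (rule ratio_eq_of_max) (use profile(3) \<open>2 \<le> m\<close> in auto)
  also have "\<dots> = 1 + real m ^ 2 / 4 * ((3 * real n + real (s 1)) / real (s 0) - 1)"
    unfolding SW0 SW1 \<open>s 0 = m * q\<close> using \<open>2 \<le> m\<close> \<open>0 < q\<close> by (simp add: field_simps power2_eq_square)
  finally have "ratio m n v 0 = 1 + real m ^ 2 / 4 * ((3 * real n + real (s 1)) / real (s 0) - 1)" .
  moreover have "\<forall>l<k. dsize n dst l = s l"
    using dsize_district_layout[OF layout] by simp
  ultimately show ?thesis
    using profile(1) outcome unfolding n_def unweighted_def by blast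
qed

text \<open>A smallest district \<open>d0\<close> contains \<open>q\<close> voters of each type and elects alternative 0, every other
  district only voters of type 1; giving \<open>d0\<close> weight \<open>k\<close> makes 0 the election winner.\<close>

definition weighted_types :: "nat \<Rightarrow> nat \<Rightarrow> nat \<Rightarrow> nat \<Rightarrow> nat" where
  "weighted_types d0 q l p = (if l = d0 then p div q else 1)"

lemma weighted_types_count_le:
  assumes "j < m" "s d0 = m * q"
  shows "card {p. p < s d \<and> weighted_types d0 q d p = j}
    \<le> card {p. p < s d \<and> weighted_types d0 q d p = (if d = d0 then 0 else 1)}"
proof (cases "d = d0")
  case True
  then have "{p. p < s d \<and> weighted_types d0 q d p = j'} = {p. p < m * q \<and> p div q = j'}" for j'
    using assms(2) by (auto simp: weighted_types_def)
  then show ?thesis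
    using card_div_blocks[of m q] assms(1) True by simp
next
  case False
  then have "{p. p < s d \<and> weighted_types d0 q d p = j} \<subseteq> {p. p < s d \<and> weighted_types d0 q d p = 1}"
    by (auto simp: weighted_types_def)
  then show ?thesis
    using False by (intro card_mono) auto
qed

lemma weighted_wscore_le:
  assumes "d0 < k"
  shows "wscore k (\<lambda>d. if d = d0 then real k else 1) (\<lambda>d. if d = d0 then 0 else 1) j
    \<le> wscore k (\<lambda>d. if d = d0 then real k else 1) (\<lambda>d. if d = d0 then 0 else 1) 0"
    (is "wscore k ?w ?lw j \<le> _")
proof -
  have "wscore k ?w ?lw 0 = (\<Sum>d<k. if d = d0 then real k else 0)"
    unfolding wscore_def by (intro sum.cong) auto
  then have "wscore k ?w ?lw 0 = real k"
    using assms by simp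
  moreover have "wscore k ?w ?lw j \<le> (\<Sum>d<k. 1)" if "j \<noteq> 0"
    unfolding wscore_def by (rule sum_mono) (use that in auto)
  ultimately show ?thesis
    by (cases "j = 0") auto
qed

lemma weighted_types_welfare_one:
  assumes "2 \<le> m" "d0 < k" "s d0 = m * q"
  shows "(\<Sum>l<k. \<Sum>p<s l. type_val m (weighted_types d0 q l p) 1)
    = real (\<Sum>l<k. s l) + real q * (1 / real m + real m / 2) - real (s d0)"
proof -
  have "(\<Sum>p<s l. type_val m (weighted_types d0 q l p) 1)
      = real (s l) + (if l = d0 then real q * (1 / real m + real m / 2) - real (s d0) else 0)" for l
  proof (cases "l = d0")
    case True
    then show ?thesis
      using sum_mixed_block_one[OF assms(1), of q] assms(3) by (simp add: weighted_types_def)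
  qed (simp add: weighted_types_def type_val_def)
  then show ?thesis
    using assms(2) by (simp add: sum.distrib)
qed

lemma unrestricted_bound_attained:
  assumes "2 \<le> m" "2 \<le> k" "\<forall>l<k. 0 < s l" "m dvd Min (s ` {..<k})"
  shows "\<exists>dst w v tp lw a.
    valid_election m (\<Sum>l<k. s l) k dst w v \<and>
    (\<forall>l<k. dsize (\<Sum>l<k. s l) dst l = s l) \<and>
    pv_outcome m (\<Sum>l<k. s l) k dst w v tp lw a \<and>
    ratio m (\<Sum>l<k. s l) v a = 1 + real m ^ 2 * (real (\<Sum>l<k. s l) / real (Min (s ` {..<k})) - 1 / 2)"
proof -
  define n where "n = (\<Sum>l<k. s l)"
  have "1 \<le> k"
    using assms(2) by simp
  then have "0 \<in> {..<k}"
    by simp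
  then have "Min (s ` {..<k}) \<in> s ` {..<k}"
    by (intro Min_in) blast+
  then obtain d0 where "d0 < k" and d0_min: "s d0 = Min (s ` {..<k})"
    by auto
  define q where "q = s d0 div m"
  have "s d0 = m * q"
    using assms(4) d0_min unfolding q_def by simp
  moreover have "0 < s d0"
    using assms(3) \<open>d0 < k\<close> by simp
  ultimately have "0 < q"
    by (metis nat_0_less_mult_iff)
  obtain dst pos where layout: "district_layout n k s dst pos"
    using ex_district_layout unfolding n_def by blast
  define T where "T = weighted_types d0 q"
  define v where "v = (\<lambda>i. type_val m (T (dst i) (pos i)))"
  define tp where "tp = (\<lambda>i. T (dst i) (pos i))"
  define w where "w = (\<lambda>d. if d = d0 then real k else 1)"
  define lw where "lw = (\<lambda>d. if d = d0 then 0 else 1::nat)"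
  have types: "T l p < m" if "l < k" "p < s l" for l p
    using that assms(1) \<open>0 < q\<close> \<open>s d0 = m * q\<close> unfolding T_def weighted_types_def
    by (auto simp: div_less_iff_less_mult mult.commute)
  have profile: "valid_election m n k dst w v" "valid_top m n v tp" "\<forall>j<m. SW n v j \<le> SW n v 1"
    using typed_profile[of n k s dst pos m w T] layout \<open>1 \<le> k\<close> assms(1,3) types
    unfolding v_def tp_def w_def by auto
  have "valid_local_winners m n k dst tp lw"
    unfolding valid_local_winners_def tp_def lw_def T_def
    using pcount_district_layout[OF layout] weighted_types_count_le[of _ m s d0 q] \<open>s d0 = m * q\<close> assms(1)
    by simp
  then have outcome: "pv_outcome m n k dst w v tp lw 0"
    unfolding pv_outcome_def w_def lw_def using profile(2) assms(1) weighted_wscore_le[OF \<open>d0 < k\<close>]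
    by auto
  have SW0: "SW n v 0 = real q / real m"
    unfolding v_def
    by (rule SW_zero_typed_profile[OF layout \<open>d0 < k\<close> \<open>s d0 = m * q\<close>])
      (use assms(1) in \<open>auto simp: T_def weighted_types_def\<close>)
  have SW1: "SW n v 1 = real n + real q * (1 / real m + real m / 2) - real (s d0)"
    using SW_district_layout[OF layout, of "\<lambda>l p. type_val m (T l p)" 1]
      weighted_types_welfare_one[of m d0 k s q] assms(1) \<open>d0 < k\<close> \<open>s d0 = m * q\<close>
    unfolding v_def n_def T_def by simp
  have "ratio m n v 0 = SW n v 1 / SW n v 0"
    by (rule ratio_eq_of_max) (use profile(3) assms(1) in auto)
  also have "\<dots> = 1 + real m ^ 2 * (real n / real (s d0) - 1 / 2)"
    unfolding SW0 SW1 \<open>s d0 = m * q\<close> using assms(1) \<open>0 < q\<close> by (simp add: field_simps power2_eq_square)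
  finally have "ratio m n v 0 = 1 + real m ^ 2 * (real n / real (Min (s ` {..<k})) - 1 / 2)"
    by (simp add: d0_min)
  moreover have "\<forall>l<k. dsize n dst l = s l"
    using dsize_district_layout[OF layout] by simp
  ultimately show ?thesis
    using profile(1) outcome unfolding n_def by blast
qed

lemma symmetric_bound_attained:
  assumes "2 \<le> k" "k < m" "0 < q" "m dvd q" "3 \<le> k \<longrightarrow> even q"
  shows "\<exists>dst w v tp lw a.
    valid_election m (k * q) k dst w v \<and> symmetric (k * q) k dst w \<and>
    pv_outcome m (k * q) k dst w v tp lw a \<and>
    ratio m (k * q) v a = 1 + 3 * real m ^ 2 * real k / 4"
proof -
  obtain dst w v tp lw a where election: "valid_election m (k * q) k dst w v"
    and "unweighted k w" "\<forall>l<k. dsize (k * q) dst l = q"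
    and outcome: "pv_outcome m (k * q) k dst w v tp lw a"
    and "ratio m (k * q) v a = 1 + real m ^ 2 / 4 * ((3 * real (k * q) + real q) / real q - 1)"
    using unweighted_bound_attained[of k m "\<lambda>_. q"] assms by (auto simp: mult.commute)
  moreover have "1 + real m ^ 2 / 4 * ((3 * real (k * q) + real q) / real q - 1) = 1 + 3 * real m ^ 2 * real k / 4"
    using assms(3) by (simp add: field_simps)
  moreover have "symmetric (k * q) k dst w"
    unfolding symmetric_def using calculation(2,3) by simp
  ultimately show ?thesis
    by metis
qed

theorem theorem3:
  shows
  \<comment> \<open>Upper bound, symmetric\<close>
  "(\<forall>m n k dst w v tp lw a.
      valid_election m n k dst w v \<and> symmetric n k dst w \<and>
      pv_outcome m n k dst w v tp lw a \<longrightarrow>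
      ratio m n v a \<le> 1 + 3 * real m ^ 2 * real k / 4)
   \<and>
  \<comment> \<open>Upper bound, unweighted\<close>
   (\<forall>m n k dst w v tp lw a.
      valid_election m n k dst w v \<and> unweighted k w \<and>
      pv_outcome m n k dst w v tp lw a \<longrightarrow>
      ratio m n v a \<le> 1 + real m ^ 2 / 4 *
        ((3 * real n + real (max_size n k dst)) / real (min_size n k dst) - 1))
   \<and>
  \<comment> \<open>Upper bound, unrestricted\<close>
   (\<forall>m n k dst w v tp lw a.
      valid_election m n k dst w v \<and>
      pv_outcome m n k dst w v tp lw a \<longrightarrow>
      ratio m n v a \<le> 1 + real m ^ 2 * (real n / real (min_size n k dst) - 1 / 2))
   \<and>
  \<comment> \<open>Tightness (a), unweighted; district 0 has minimum size, district 1 maximum size\<close>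
   (\<forall>m k (s :: nat \<Rightarrow> nat).
      2 \<le> k \<and> k < m \<and> (\<forall>l<k. 0 < s l) \<and>
      s 0 = Min (s ` {..<k}) \<and> m dvd s 0 \<and> s 1 = Max (s ` {..<k}) \<and>
      (\<forall>l. 2 \<le> l \<and> l < k \<longrightarrow> even (s l)) \<longrightarrow>
      (\<exists>dst w v tp lw a.
         valid_election m (\<Sum>l<k. s l) k dst w v \<and> unweighted k w \<and>
         (\<forall>l<k. dsize (\<Sum>l<k. s l) dst l = s l) \<and>
         pv_outcome m (\<Sum>l<k. s l) k dst w v tp lw a \<and>
         ratio m (\<Sum>l<k. s l) v a =
           1 + real m ^ 2 / 4 * ((3 * real (\<Sum>l<k. s l) + real (s 1)) / real (s 0) - 1)))
   \<and>
  \<comment> \<open>Tightness (a), symmetric special case: all districts of size q = n/k\<close>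
   (\<forall>m k q.
      2 \<le> k \<and> k < m \<and> 0 < q \<and> m dvd q \<and> (3 \<le> k \<longrightarrow> even q) \<longrightarrow>
      (\<exists>dst w v tp lw a.
         valid_election m (k * q) k dst w v \<and> symmetric (k * q) k dst w \<and>
         pv_outcome m (k * q) k dst w v tp lw a \<and>
         ratio m (k * q) v a = 1 + 3 * real m ^ 2 * real k / 4))
   \<and>
  \<comment> \<open>Tightness (b), unrestricted\<close>
   (\<forall>m k (s :: nat \<Rightarrow> nat).
      2 \<le> m \<and> 2 \<le> k \<and> (\<forall>l<k. 0 < s l) \<and> m dvd Min (s ` {..<k}) \<longrightarrow>
      (\<exists>dst w v tp lw a.
         valid_election m (\<Sum>l<k. s l) k dst w v \<and>
         (\<forall>l<k. dsize (\<Sum>l<k. s l) dst l = s l) \<and>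
         pv_outcome m (\<Sum>l<k. s l) k dst w v tp lw a \<and>
         ratio m (\<Sum>l<k. s l) v a =
           1 + real m ^ 2 * (real (\<Sum>l<k. s l) / real (Min (s ` {..<k})) - 1 / 2)))"
  by (intro conjI allI impI; elim conjE;
      rule ratio_le_symmetric ratio_le_unweighted ratio_le_unrestricted
        unweighted_bound_attained symmetric_bound_attained unrestricted_bound_attained;
      assumption)

end
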